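(* Let $J'=(z_w,z_w')$ be a nonempty open interval, let $r:J'\to\mathbb{R}$ be differentiable, non-increasing, with $r(z)\neq 0$ and $|r(z)|<1$ for all $z\in J'$, and let $h:J'\to\mathbb{R}$ be differentiable with $\dot h(z)=1+h(z)^2-2r(z)h(z)$ on $J'$, having exactly one zero $z_*\in J'$. Let $G(z)=z-\dfrac{2h(z)}{2+h(z)^2-2r(z)h(z)}$. Then for every initial guess $z_0\in J'$ the iteration $z_{n+1}=G(z_n)$ is well defined and the sequence $(z_n)$ converges monotonically to $z_*$.
   Context: $\dot{}$ denotes differentiation with respect to $z$. "Converges monotonically" means all iterates lie in $J'$, the sequence is monotone, and its limit is $z_*$. *)

theory Defs
  imports "HOL-Analysis.Analysis"
begin

definition iterG :: "(real \<Rightarrow> real) \<Rightarrow> (real \<Rightarrow> real) \<Rightarrow> real \<Rightarrow> real" where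
  "iterG r h z = z - 2 * h z / (2 + (h z)^2 - 2 * r z * h z)"

end

theory Submission
  imports Defs
begin

text \<open>
  Since \<open>|r| < 1\<close>, the Riccati equation forces \<open>h' > 0\<close>, so \<open>h\<close> is increasing and changes
  sign exactly at \<open>z\<^sub>*\<close>. For fixed \<open>c = r(x)\<close> the correction \<open>\<phi>\<^sub>c(t) = 2 h(t)/D\<^sub>c(t) - t\<close>,
  with \<open>D\<^sub>c = 2 + h\<^sup>2 - 2 c h\<close>, is non-increasing between \<open>z\<^sub>*\<close> and \<open>x\<close>: there the monotonicity of
  \<open>r\<close> gives \<open>0 \<le> h' \<le> D\<^sub>c - 1\<close>, which makes \<open>\<phi>\<^sub>c' \<le> 0\<close>. Comparing \<open>\<phi>\<^sub>c(x)\<close> with \<open>\<phi>\<^sub>c(z\<^sub>*) = -z\<^sub>*\<close>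
  shows that \<open>G(x)\<close> lies between \<open>x\<close> and \<open>z\<^sub>*\<close>. The iterates are therefore monotone and
  bounded; their limit is a fixed point of the continuous map \<open>G\<close>, i.e. a zero of \<open>h\<close>,
  hence \<open>z\<^sub>*\<close>.
\<close>

lemma riccati_rhs_pos:
  fixes c H :: real
  assumes "\<bar>c\<bar> < 1"
  shows "0 < 1 + H^2 - 2 * c * H"
proof -
  have "1 + H^2 - 2 * c * H = (H - c)^2 + (1 - c^2)"
    by (simp add: power2_eq_square algebra_simps)
  moreover have "c^2 < 1"
    using assms by (simp add: abs_square_less_1)
  ultimately show ?thesis
    by (smt (verit) zero_le_power2)
qed

lemma newton_correction_has_real_derivative:
  assumes "(h has_real_derivative d) (at t)" and "0 < 2 + (h t)^2 - 2 * c * h t"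
  shows "((\<lambda>t. 2 * h t / (2 + (h t)^2 - 2 * c * h t) - t) has_real_derivative
           2 * d * (2 - (h t)^2) / (2 + (h t)^2 - 2 * c * h t)^2 - 1) (at t)"
  using assms
  by (auto intro!: derivative_eq_intros simp: field_simps power2_eq_square)

lemma newton_correction_derivative_nonpos:
  fixes d H c :: real
  assumes d_nonneg: "0 \<le> d" and d_le: "d \<le> 1 + H^2 - 2 * c * H" and c: "\<bar>c\<bar> < 1"
  shows "2 * d * (2 - H^2) / (2 + H^2 - 2 * c * H)^2 - 1 \<le> 0"
proof -
  define D where "D = 2 + H^2 - 2 * c * H"
  have D_gt_1: "1 < D"
    using riccati_rhs_pos[OF c, of H] unfolding D_def by simp
  have "2 * d * (2 - H^2) \<le> D^2"
  proof (cases "H^2 \<le> 2")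
    case True
    have "2 * d * (2 - H^2) \<le> 4 * d"
      using mult_left_mono[of "2 - H^2" 2 d] d_nonneg by simp
    also have "\<dots> \<le> 4 * (D - 1)"
      using d_le unfolding D_def by simp
    also have "\<dots> \<le> D^2"
      using zero_le_power2[of "D - 2"] by (simp add: power2_eq_square algebra_simps)
    finally show ?thesis .
  next
    case False
    then have "2 * d * (2 - H^2) \<le> 0"
      using d_nonneg by (simp add: mult_nonneg_nonpos)
    then show ?thesis
      by (smt (verit) zero_le_power2)
  qed
  then show ?thesis
    using D_gt_1 unfolding D_def[symmetric] by (simp add: field_simps)
qed

lemma newton_correction_antimono:
  fixes h d :: "real \<Rightarrow> real"
  assumes "p \<le> q" and c: "\<bar>c\<bar> < 1"
    and deriv: "\<And>t. t \<in> {p..q} \<Longrightarrow> (h has_real_derivative d t) (at t)"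
    and d_nonneg: "\<And>t. t \<in> {p..q} \<Longrightarrow> 0 \<le> d t"
    and d_le: "\<And>t. t \<in> {p..q} \<Longrightarrow> d t \<le> 1 + (h t)^2 - 2 * c * h t"
  shows "2 * h q / (2 + (h q)^2 - 2 * c * h q) - q \<le> 2 * h p / (2 + (h p)^2 - 2 * c * h p) - p"
  using \<open>p \<le> q\<close>
proof (rule DERIV_nonpos_imp_nonincreasing)
  fix t assume "p \<le> t" "t \<le> q"
  then have t: "t \<in> {p..q}" by simp
  have "0 < 2 + (h t)^2 - 2 * c * h t"
    using riccati_rhs_pos[OF c, of "h t"] by simp
  then show "\<exists>y. ((\<lambda>t. 2 * h t / (2 + (h t)^2 - 2 * c * h t) - t) has_real_derivative y) (at t)
               \<and> y \<le> 0"
    using newton_correction_has_real_derivative[OF deriv[OF t]]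
      newton_correction_derivative_nonpos[OF d_nonneg[OF t] d_le[OF t] c] by blast
qed

lemma iterG_eq: "iterG r h x = x - 2 * h x / (2 + (h x)^2 - 2 * r x * h x)"
  unfolding iterG_def by simp

lemma iterG_continuous:
  assumes "isCont r x" "isCont h x" "\<bar>r x\<bar> < 1"
  shows "isCont (iterG r h) x"
proof -
  have "0 < 2 + (h x)^2 - 2 * r x * h x"
    using riccati_rhs_pos[OF assms(3), of "h x"] by simp
  then show ?thesis
    unfolding iterG_eq using assms by (intro continuous_intros) auto
qed

lemma limit_of_iteration_is_fixed_point:
  fixes f :: "'a::t2_space \<Rightarrow> 'a"
  assumes "z \<longlonglongrightarrow> L" "\<And>n. z (Suc n) = f (z n)" "isCont f L"
  shows "f L = L"
proof -
  have "(\<lambda>n. f (z n)) \<longlonglongrightarrow> f L"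
    using assms(1,3) isCont_tendsto_compose by blast
  moreover have "(\<lambda>n. f (z n)) \<longlonglongrightarrow> L"
    using LIMSEQ_Suc[OF assms(1)] assms(2) by simp
  ultimately show ?thesis
    using LIMSEQ_unique by blast
qed

locale riccati_zero =
  fixes a b zs :: real and r h :: "real \<Rightarrow> real"
  assumes r_noninc: "\<And>x y. x \<in> {a<..<b} \<Longrightarrow> y \<in> {a<..<b} \<Longrightarrow> x \<le> y \<Longrightarrow> r y \<le> r x"
    and r_lt1: "\<And>x. x \<in> {a<..<b} \<Longrightarrow> \<bar>r x\<bar> < 1"
    and h_deriv: "\<And>x. x \<in> {a<..<b} \<Longrightarrow>
                    (h has_real_derivative (1 + (h x)^2 - 2 * r x * h x)) (at x)"
    and zs_in: "zs \<in> {a<..<b}"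
    and h_zs: "h zs = 0"
begin

lemma denominator_pos: "x \<in> {a<..<b} \<Longrightarrow> 0 < 2 + (h x)^2 - 2 * r x * h x"
  using riccati_rhs_pos[OF r_lt1, of x "h x"] by simp

lemma h_mono:
  assumes "x \<in> {a<..<b}" "y \<in> {a<..<b}" "x \<le> y"
  shows "h x \<le> h y"
proof (rule DERIV_nonneg_imp_nondecreasing[OF assms(3)])
  fix t assume "x \<le> t" "t \<le> y"
  then have "t \<in> {a<..<b}" using assms by auto
  then show "\<exists>d. (h has_real_derivative d) (at t) \<and> 0 \<le> d"
    using h_deriv riccati_rhs_pos[OF r_lt1] less_imp_le by blast
qed

lemma iterG_above:
  assumes x: "x \<in> {a<..<b}" "zs \<le> x"
  shows "zs \<le> iterG r h x \<and> iterG r h x \<le> x"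
proof -
  have sub: "t \<in> {a<..<b}" if "t \<in> {zs..x}" for t
    using that x zs_in by auto
  have "2 * h x / (2 + (h x)^2 - 2 * r x * h x) - x \<le> 2 * h zs / (2 + (h zs)^2 - 2 * r x * h zs) - zs"
  proof (rule newton_correction_antimono[OF x(2) r_lt1[OF x(1)] h_deriv[OF sub]])
    fix t assume t: "t \<in> {zs..x}"
    show "0 \<le> 1 + (h t)^2 - 2 * r t * h t"
      using riccati_rhs_pos[OF r_lt1[OF sub[OF t]]] less_imp_le by blast
    have "r x \<le> r t" using r_noninc[OF sub[OF t] x(1)] t by simp
    moreover have "0 \<le> h t" using h_mono[OF zs_in sub[OF t]] t h_zs by simp
    ultimately show "1 + (h t)^2 - 2 * r t * h t \<le> 1 + (h t)^2 - 2 * r x * h t"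
      by (simp add: mult_right_mono)
  qed
  moreover have "0 \<le> h x"
    using h_mono[OF zs_in x(1,2)] h_zs by simp
  ultimately show ?thesis
    using denominator_pos[OF x(1)] h_zs unfolding iterG_eq by simp
qed

lemma iterG_below:
  assumes x: "x \<in> {a<..<b}" "x \<le> zs"
  shows "iterG r h x \<le> zs \<and> x \<le> iterG r h x"
proof -
  have sub: "t \<in> {a<..<b}" if "t \<in> {x..zs}" for t
    using that x zs_in by auto
  have "2 * h zs / (2 + (h zs)^2 - 2 * r x * h zs) - zs \<le> 2 * h x / (2 + (h x)^2 - 2 * r x * h x) - x"
  proof (rule newton_correction_antimono[OF x(2) r_lt1[OF x(1)] h_deriv[OF sub]])
    fix t assume t: "t \<in> {x..zs}"
    show "0 \<le> 1 + (h t)^2 - 2 * r t * h t"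
      using riccati_rhs_pos[OF r_lt1[OF sub[OF t]]] less_imp_le by blast
    have "r t \<le> r x" using r_noninc[OF x(1) sub[OF t]] t by simp
    moreover have "h t \<le> 0" using h_mono[OF sub[OF t] zs_in] t h_zs by simp
    ultimately show "1 + (h t)^2 - 2 * r t * h t \<le> 1 + (h t)^2 - 2 * r x * h t"
      by (simp add: mult_right_mono_neg)
  qed
  moreover have "h x \<le> 0"
    using h_mono[OF x(1) zs_in x(2)] h_zs by simp
  ultimately show ?thesis
    using denominator_pos[OF x(1)] h_zs unfolding iterG_eq
    by (simp add: divide_nonpos_pos)
qed

lemma iterates_above:
  assumes z0: "z 0 \<in> {a<..<b}" "zs \<le> z 0" and z_Suc: "\<And>n. z (Suc n) = iterG r h (z n)"
  shows "\<forall>n. z n \<in> {zs..z 0}" and "decseq z"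
proof -
  show bounds: "\<forall>n. z n \<in> {zs..z 0}"
  proof
    fix n show "z n \<in> {zs..z 0}"
    proof (induction n)
      case 0 then show ?case using z0 by simp
    next
      case (Suc n)
      then have "z n \<in> {a<..<b}" using z0 zs_in by auto
      then show ?case using iterG_above[of "z n"] Suc z_Suc by force
    qed
  qed
  have "z n \<in> {a<..<b}" for n using bounds[rule_format, of n] z0(1) zs_in by auto
  then show "decseq z"
    using iterG_above bounds z_Suc by (intro decseq_SucI) auto
qed

lemma iterates_below:
  assumes z0: "z 0 \<in> {a<..<b}" "z 0 \<le> zs" and z_Suc: "\<And>n. z (Suc n) = iterG r h (z n)"
  shows "\<forall>n. z n \<in> {z 0..zs}" and "incseq z"
proof -
  show bounds: "\<forall>n. z n \<in> {z 0..zs}"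
  proof
    fix n show "z n \<in> {z 0..zs}"
    proof (induction n)
      case 0 then show ?case using z0 by simp
    next
      case (Suc n)
      then have "z n \<in> {a<..<b}" using z0 zs_in by auto
      then show ?case using iterG_below[of "z n"] Suc z_Suc by force
    qed
  qed
  have "z n \<in> {a<..<b}" for n using bounds[rule_format, of n] z0(1) zs_in by auto
  then show "incseq z"
    using iterG_below bounds z_Suc by (intro incseq_SucI) auto
qed

lemma iterates_monotone_between:
  assumes "z 0 \<in> {a<..<b}" and "\<And>n. z (Suc n) = iterG r h (z n)"
  shows "(\<forall>n. z n \<in> {min (z 0) zs..max (z 0) zs}) \<and> monoseq z"
proof (cases "zs \<le> z 0")
  case True
  then show ?thesis using iterates_above[OF assms(1) True assms(2)] by (simp add: monoseq_iff)
next
  case False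
  then have below: "z 0 \<le> zs" by simp
  show ?thesis using iterates_below[OF assms(1) below assms(2)] by (simp add: monoseq_iff)
qed

end

theorem mainTheorem4:
  fixes a b zs z0 :: real and r h :: "real \<Rightarrow> real" and z :: "nat \<Rightarrow> real"
  assumes ab: "a < b"
    and r_diff: "\<forall>x\<in>{a<..<b}. r differentiable (at x)"
    and r_noninc: "\<forall>x\<in>{a<..<b}. \<forall>y\<in>{a<..<b}. x \<le> y \<longrightarrow> r y \<le> r x"
    and r_nz: "\<forall>x\<in>{a<..<b}. r x \<noteq> 0"
    and r_lt1: "\<forall>x\<in>{a<..<b}. \<bar>r x\<bar> < 1"
    and h_deriv: "\<forall>x\<in>{a<..<b}. (h has_real_derivative (1 + (h x)^2 - 2 * r x * h x)) (at x)"
    and zs_in: "zs \<in> {a<..<b}"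
    and h_zs: "h zs = 0"
    and h_unique: "\<forall>x\<in>{a<..<b}. h x = 0 \<longrightarrow> x = zs"
    and z0_in: "z0 \<in> {a<..<b}"
    and z_0: "z 0 = z0"
    and z_Suc: "\<forall>n. z (Suc n) = iterG r h (z n)"
  shows "(\<forall>n. z n \<in> {a<..<b} \<and> 2 + (h (z n))^2 - 2 * r (z n) * h (z n) \<noteq> 0)
         \<and> (incseq z \<or> decseq z) \<and> z \<longlonglongrightarrow> zs"
proof -
  interpret riccati_zero a b zs r h
    using r_noninc r_lt1 h_deriv zs_in h_zs by unfold_locales auto
  let ?K = "{min z0 zs..max z0 zs}"
  have K_sub: "?K \<subseteq> {a<..<b}"
    using z0_in zs_in by auto
  have between: "\<forall>n. z n \<in> ?K" and mono: "monoseq z"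
    using iterates_monotone_between[of z] z0_in z_0 z_Suc by auto
  then have "convergent z"
    by (intro Bseq_monoseq_convergent Limits.Bseq_eq_bounded) auto
  then obtain L where L: "z \<longlonglongrightarrow> L"
    by (auto simp: convergent_def)
  have "\<forall>\<^sub>F n in sequentially. z n \<in> ?K"
    using between by (intro always_eventually) blast
  then have "L \<in> ?K"
    using Lim_in_closed_set[OF closed_atLeastAtMost _ trivial_limit_sequentially L] by blast
  then have L_in: "L \<in> {a<..<b}"
    using K_sub by blast
  have "isCont r L"
    using r_diff L_in by (simp add: differentiable_imp_continuous_within)
  moreover have "isCont h L"
    using h_deriv L_in DERIV_isCont by blast
  ultimately have "isCont (iterG r h) L"
    using iterG_continuous r_lt1 L_in by blast
  then have "iterG r h L = L"
    using limit_of_iteration_is_fixed_point L z_Suc by blast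
  then have "h L = 0"
    using denominator_pos[OF L_in] unfolding iterG_eq by simp
  then have "L = zs"
    using h_unique L_in by blast
  moreover have "z n \<in> {a<..<b}" for n
    using between K_sub by blast
  ultimately show ?thesis
    using denominator_pos mono L by (simp add: monoseq_iff less_imp_neq[symmetric])
qed

end
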